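(* Let $(X,d)$ be a sequentially right $K$-complete quasi-pseudometric space and $\varphi:X\to\mathbb{R}\cup\{\infty\}$ a proper, bounded below, lower semicontinuous function. Let $\varepsilon,\lambda>0$ and let $x_0\in X$ satisfy $\varphi(x_0)\le\varepsilon+\inf\varphi(X)$. Put $\gamma=\varepsilon/\lambda$ and, for $x\in X$, $S_\gamma(x)=\{y\in X:\varphi(y)+\gamma d(y,x)\le\varphi(x)\}$. Then there exists $z\in X$ such that (i) $\varphi(z)+\frac{\varepsilon}{\lambda}d(z,x_0)\le\varphi(x_0)$ (so $\varphi(z)\le\varphi(x_0)$); (ii) $d(z,x_0)\le\lambda$; (iii) $\varphi(y)=\varphi(z)$ for all $y\in S_\gamma(z)$; (iv) $\varphi(z)<\varphi(x)+\frac{\varepsilon}{\lambda}d(x,z)$ for all $x\in X\setminus S_\gamma(z)$.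
   Context: A quasi-pseudometric on $X$ is $d:X\times X\to[0,\infty)$ with $d(x,x)=0$ and $d(x,z)\le d(x,y)+d(y,z)$ (no symmetry). Topology $\tau_d$: neighbourhood base at $x$ given by $\{y:d(x,y)<r\}$, $r>0$; $x_n\to x$ iff $d(x,x_n)\to0$. A sequence $(x_n)$ is right $K$-Cauchy if for every $\varepsilon>0$ there is $n_\varepsilon$ with $d(x_{n+k},x_n)<\varepsilon$ for all $n\ge n_\varepsilon$, $k\in\mathbb{N}$; $X$ is sequentially right $K$-complete if every right $K$-Cauchy sequence converges. $\varphi$ is proper if it is finite somewhere; lower semicontinuous if $\varphi(x)\le\liminf_n\varphi(x_n)$ whenever $x_n\to x$. *)

theory Defs
  imports "HOL-Analysis.Analysis"
begin

definition quasi_pseudometric :: "('a \<Rightarrow> 'a \<Rightarrow> real) \<Rightarrow> bool" where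
  "quasi_pseudometric d \<longleftrightarrow>
     (\<forall>x y. 0 \<le> d x y) \<and> (\<forall>x. d x x = 0) \<and> (\<forall>x y z. d x z \<le> d x y + d y z)"

text \<open>Convergence in the topology tau_d: x_n converges to x iff d(x, x_n) tends to 0.\<close>
definition qconv :: "('a \<Rightarrow> 'a \<Rightarrow> real) \<Rightarrow> (nat \<Rightarrow> 'a) \<Rightarrow> 'a \<Rightarrow> bool" where
  "qconv d xs x \<longleftrightarrow> (\<lambda>n. d x (xs n)) \<longlonglongrightarrow> 0"

definition right_K_Cauchy :: "('a \<Rightarrow> 'a \<Rightarrow> real) \<Rightarrow> (nat \<Rightarrow> 'a) \<Rightarrow> bool" where
  "right_K_Cauchy d xs \<longleftrightarrow>
     (\<forall>e>0. \<exists>N. \<forall>n\<ge>N. \<forall>k. d (xs (n + k)) (xs n) < e)"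

definition seq_right_K_complete :: "('a \<Rightarrow> 'a \<Rightarrow> real) \<Rightarrow> bool" where
  "seq_right_K_complete d \<longleftrightarrow> (\<forall>xs. right_K_Cauchy d xs \<longrightarrow> (\<exists>x. qconv d xs x))"

definition proper_fun :: "('a \<Rightarrow> ereal) \<Rightarrow> bool" where
  "proper_fun \<phi> \<longleftrightarrow> (\<exists>x. \<phi> x < \<infinity>)"

definition bounded_below_fun :: "('a \<Rightarrow> ereal) \<Rightarrow> bool" where
  "bounded_below_fun \<phi> \<longleftrightarrow> (\<exists>m::real. \<forall>x. ereal m \<le> \<phi> x)"

definition q_lsc :: "('a \<Rightarrow> 'a \<Rightarrow> real) \<Rightarrow> ('a \<Rightarrow> ereal) \<Rightarrow> bool" where
  "q_lsc d \<phi> \<longleftrightarrow>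
     (\<forall>xs x. qconv d xs x \<longrightarrow> \<phi> x \<le> liminf (\<lambda>n. \<phi> (xs n)))"

definition S_gamma :: "('a \<Rightarrow> 'a \<Rightarrow> real) \<Rightarrow> ('a \<Rightarrow> ereal) \<Rightarrow> real \<Rightarrow> 'a \<Rightarrow> 'a set" where
  "S_gamma d \<phi> \<gamma> x = {y. \<phi> y + ereal (\<gamma> * d y x) \<le> \<phi> x}"

end

theory Submission
  imports Defs
begin

text \<open>Starting from x0, choose x_{n+1} in S(x_n) with
  \<phi>(x_{n+1}) within 1/(n+1) of the infimum of \<phi> over S(x_n). The sets S(x_n) are nested, so
  \<gamma> d(x_{n+k}, x_n) \<le> \<phi>(x_n) - \<phi>(x_{n+k}), and the convergence of the decreasing values
  \<phi>(x_n) to some L makes the sequence right K-Cauchy; let z be a limit. Lower semicontinuity gives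
  \<phi>(z) \<le> L and then z \<in> S(x_n) for every n. Any y \<in> S(z) also lies in every S(x_n), hence
  \<phi>(y) \<ge> L by near-minimality, so \<phi>(y) \<le> \<phi>(z) \<le> L \<le> \<phi>(y). Properties (i)-(ii) follow from
  z \<in> S(x0) and \<phi>(x0) \<le> \<epsilon> + inf \<phi>, and (iv) is the definition of S(z).\<close>

lemma S_gamma_refl:
  assumes "quasi_pseudometric d"
  shows "x \<in> S_gamma d \<phi> \<gamma> x"
  using assms unfolding quasi_pseudometric_def S_gamma_def by simp

lemma S_gamma_trans:
  assumes "quasi_pseudometric d" and "\<gamma> \<ge> 0"
    and "y \<in> S_gamma d \<phi> \<gamma> x" and "w \<in> S_gamma d \<phi> \<gamma> y"
  shows "w \<in> S_gamma d \<phi> \<gamma> x"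
proof -
  have "\<gamma> * d w x \<le> \<gamma> * d w y + \<gamma> * d y x"
    using assms(1,2) unfolding quasi_pseudometric_def
    by (metis distrib_left mult_left_mono)
  then have "\<phi> w + ereal (\<gamma> * d w x) \<le> (\<phi> w + ereal (\<gamma> * d w y)) + ereal (\<gamma> * d y x)"
    by (simp add: add.assoc add_left_mono)
  also have "\<dots> \<le> \<phi> y + ereal (\<gamma> * d y x)"
    using assms(4) unfolding S_gamma_def by (simp add: add_right_mono)
  also have "\<dots> \<le> \<phi> x"
    using assms(3) unfolding S_gamma_def by simp
  finally show ?thesis
    unfolding S_gamma_def by simp
qed

lemma S_gamma_le:
  assumes "quasi_pseudometric d" and "\<gamma> \<ge> 0" and "y \<in> S_gamma d \<phi> \<gamma> x"
  shows "\<phi> y \<le> \<phi> x"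
proof -
  have "0 \<le> \<gamma> * d y x"
    using assms(1,2) unfolding quasi_pseudometric_def by simp
  then have "\<phi> y \<le> \<phi> y + ereal (\<gamma> * d y x)"
    by (simp add: ereal_le_add_self)
  also have "\<dots> \<le> \<phi> x"
    using assms(3) unfolding S_gamma_def by simp
  finally show ?thesis .
qed

lemma S_gamma_dist_bound:
  assumes "quasi_pseudometric d" and "\<gamma> \<ge> 0" and "y \<in> S_gamma d \<phi> \<gamma> x"
    and "\<phi> x < \<infinity>" and "\<phi> y \<noteq> -\<infinity>" and "\<phi> x \<le> ereal c + \<phi> y"
  shows "\<gamma> * d y x \<le> c"
proof -
  have "\<phi> y + ereal (\<gamma> * d y x) \<le> ereal c + \<phi> y"
    using assms(3,6) unfolding S_gamma_def by simp
  moreover have "\<phi> y < \<infinity>"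
    using S_gamma_le[OF assms(1-3)] assms(4) by (rule le_less_trans)
  ultimately show ?thesis
    using assms(5) by (cases "\<phi> y") auto
qed

lemma exists_nearly_minimal:
  fixes \<phi> :: "'a \<Rightarrow> ereal"
  assumes "a \<in> A" and "\<phi> a < \<infinity>" and "\<And>x. x \<in> A \<Longrightarrow> ereal m \<le> \<phi> x" and "e > 0"
  shows "\<exists>y\<in>A. \<forall>w\<in>A. \<phi> y \<le> \<phi> w + ereal e"
proof -
  have "ereal m \<le> (INF x\<in>A. \<phi> x)"
    using assms(3) by (rule INF_greatest)
  moreover have "(INF x\<in>A. \<phi> x) < \<infinity>"
    using assms(1,2) by (meson INF_lower le_less_trans)
  ultimately obtain r where r: "(INF x\<in>A. \<phi> x) = ereal r"
    by (cases "INF x\<in>A. \<phi> x") auto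
  then obtain y where "y \<in> A" and y: "\<phi> y < ereal (r + e)"
    using assms(4) INF_less_iff[of \<phi> A "ereal (r + e)"] by auto
  have "\<phi> y \<le> \<phi> w + ereal e" if "w \<in> A" for w
  proof -
    have "ereal r \<le> \<phi> w"
      using that r by (metis INF_lower)
    then show ?thesis
      using y by (metis add_right_mono less_imp_le order_trans plus_ereal.simps(1))
  qed
  with \<open>y \<in> A\<close> show ?thesis by blast
qed

locale Ekeland_descent =
  fixes d :: "'a \<Rightarrow> 'a \<Rightarrow> real" and \<phi> :: "'a \<Rightarrow> ereal" and \<gamma> :: real
    and xs :: "nat \<Rightarrow> 'a"
  assumes quasi_pseudometric: "quasi_pseudometric d"
    and gamma_pos: "\<gamma> > 0"
    and bounded_below: "bounded_below_fun \<phi>"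
    and finite_start: "\<phi> (xs 0) < \<infinity>"
    and step: "xs (Suc n) \<in> S_gamma d \<phi> \<gamma> (xs n)"
    and nearly_minimal:
      "y \<in> S_gamma d \<phi> \<gamma> (xs n) \<Longrightarrow> \<phi> (xs (Suc n)) \<le> \<phi> y + ereal (inverse (Suc n))"
begin

lemma d_nonneg: "0 \<le> d x y"
  using quasi_pseudometric unfolding quasi_pseudometric_def by simp

lemma d_triangle: "d x z \<le> d x y + d y z"
  using quasi_pseudometric unfolding quasi_pseudometric_def by blast

lemma chain: "xs (n + k) \<in> S_gamma d \<phi> \<gamma> (xs n)"
proof (induction k)
  case 0
  show ?case using S_gamma_refl[OF quasi_pseudometric] by simp
next
  case (Suc k)
  show ?case
    using S_gamma_trans[OF quasi_pseudometric _ Suc step[of "n + k"]] gamma_pos by simp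
qed

lemma phi_not_MInfty: "\<phi> x \<noteq> -\<infinity>"
  using bounded_below unfolding bounded_below_fun_def
  by (metis MInfty_neq_ereal(1) ereal_infty_less_eq2(2))

definition level :: "nat \<Rightarrow> real" where
  "level n = real_of_ereal (\<phi> (xs n))"

lemma phi_eq_level: "\<phi> (xs n) = ereal (level n)"
proof -
  have "\<phi> (xs n) \<le> \<phi> (xs 0)"
    using S_gamma_le[OF quasi_pseudometric _ chain[of 0 n]] gamma_pos by simp
  then have "\<phi> (xs n) \<noteq> \<infinity>"
    using finite_start by auto
  moreover have "\<phi> (xs n) \<noteq> -\<infinity>"
    by (rule phi_not_MInfty)
  ultimately show ?thesis
    unfolding level_def by (cases "\<phi> (xs n)") auto
qed

lemma descent: "\<gamma> * d (xs (n + k)) (xs n) \<le> level n - level (n + k)"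
  using chain[of n k] unfolding S_gamma_def by (simp add: phi_eq_level)

lemma level_bounded_below: "\<exists>m. \<forall>n. m \<le> level n"
  using bounded_below unfolding bounded_below_fun_def by (metis ereal_less_eq(3) phi_eq_level)

lemma level_decseq: "decseq level"
proof (rule decseq_SucI)
  fix n
  have "0 \<le> \<gamma> * d (xs (Suc n)) (xs n)"
    using gamma_pos d_nonneg by simp
  then show "level (Suc n) \<le> level n"
    using descent[of n 1] by simp
qed

definition level_limit :: real where
  "level_limit = lim level"

lemma level_tendsto: "level \<longlonglongrightarrow> level_limit"
  and level_limit_le: "level_limit \<le> level n"
proof -
  obtain l where "level \<longlonglongrightarrow> l" "\<forall>n. l \<le> level n"
    using level_bounded_below decseq_convergent[OF level_decseq] by blast
  then show "level \<longlonglongrightarrow> level_limit" "level_limit \<le> level n"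
    unfolding level_limit_def by (auto simp: limI)
qed

lemma right_K_Cauchy: "right_K_Cauchy d xs"
  unfolding right_K_Cauchy_def
proof (intro allI impI)
  fix \<epsilon> :: real
  assume "\<epsilon> > 0"
  then obtain N where N: "\<And>n. n \<ge> N \<Longrightarrow> norm (level n - level_limit) < \<gamma> * \<epsilon>"
    using LIMSEQ_D[OF level_tendsto, of "\<gamma> * \<epsilon>"] gamma_pos by auto
  have "d (xs (n + k)) (xs n) < \<epsilon>" if "n \<ge> N" for n k
  proof -
    have "\<gamma> * d (xs (n + k)) (xs n) < \<gamma> * \<epsilon>"
      using descent[of n k] level_limit_le[of "n + k"] N[OF that] by simp
    then show ?thesis
      using gamma_pos by simp
  qed
  then show "\<exists>N. \<forall>n\<ge>N. \<forall>k. d (xs (n + k)) (xs n) < \<epsilon>"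
    by blast
qed

context
  fixes z
  assumes converges: "qconv d xs z" and lsc: "q_lsc d \<phi>"
begin

lemma phi_limit_le: "\<phi> z \<le> ereal level_limit"
proof -
  have "\<phi> z \<le> liminf (\<lambda>n. \<phi> (xs n))"
    using lsc converges unfolding q_lsc_def by blast
  also have "\<dots> = ereal level_limit"
    unfolding phi_eq_level by (intro lim_imp_Liminf) (auto intro: level_tendsto)
  finally show ?thesis .
qed

lemma limit_in_S_gamma: "z \<in> S_gamma d \<phi> \<gamma> (xs n)"
proof -
  have lim: "(\<lambda>k. \<gamma> * d z (xs (k + n)) + (level n - level_limit)) \<longlonglongrightarrow> \<gamma> * 0 + (level n - level_limit)"
    using converges unfolding qconv_def
    by (intro tendsto_intros LIMSEQ_ignore_initial_segment)
  have "\<gamma> * d z (xs n) \<le> \<gamma> * 0 + (level n - level_limit)"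
  proof (rule LIMSEQ_le_const[OF lim], intro exI allI impI)
    fix k
    have "\<gamma> * d z (xs n) \<le> \<gamma> * d z (xs (n + k)) + \<gamma> * d (xs (n + k)) (xs n)"
      using mult_left_mono[OF d_triangle, of \<gamma>] gamma_pos by (simp add: distrib_left)
    then show "\<gamma> * d z (xs n) \<le> \<gamma> * d z (xs (k + n)) + (level n - level_limit)"
      using descent[of n k] level_limit_le[of "n + k"] by (simp add: add.commute)
  qed
  then have "ereal level_limit + ereal (\<gamma> * d z (xs n)) \<le> \<phi> (xs n)"
    by (simp add: phi_eq_level)
  moreover have "\<phi> z + ereal (\<gamma> * d z (xs n)) \<le> ereal level_limit + ereal (\<gamma> * d z (xs n))"
    using phi_limit_le by (rule add_right_mono)
  ultimately show ?thesis
    unfolding S_gamma_def by simp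
qed

lemma level_limit_le_phi:
  assumes "\<And>n. y \<in> S_gamma d \<phi> \<gamma> (xs n)"
  shows "ereal level_limit \<le> \<phi> y"
proof (cases "\<phi> y")
  case (real r)
  have lim: "(\<lambda>n. r + inverse (real (Suc n))) \<longlonglongrightarrow> r + 0"
    by (intro tendsto_intros LIMSEQ_inverse_real_of_nat)
  have "level_limit \<le> r + 0"
  proof (rule LIMSEQ_le_const[OF lim], intro exI allI impI)
    fix n
    have "ereal (level (Suc n)) \<le> \<phi> y + ereal (inverse (Suc n))"
      using nearly_minimal[OF assms] by (simp add: phi_eq_level)
    then show "level_limit \<le> r + inverse (real (Suc n))"
      using level_limit_le[of "Suc n"] real by simp
  qed
  then show ?thesis
    using real by simp
qed (auto simp: phi_not_MInfty)

lemma phi_constant_on_S_gamma: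
  assumes "y \<in> S_gamma d \<phi> \<gamma> z"
  shows "\<phi> y = \<phi> z"
proof (rule antisym)
  show "\<phi> y \<le> \<phi> z"
    using S_gamma_le[OF quasi_pseudometric _ assms] gamma_pos by simp
  have "\<phi> z \<le> ereal level_limit"
    by (rule phi_limit_le)
  also have "\<dots> \<le> \<phi> y"
    using S_gamma_trans[OF quasi_pseudometric _ limit_in_S_gamma assms] gamma_pos
    by (intro level_limit_le_phi) simp
  finally show "\<phi> z \<le> \<phi> y" .
qed

end

end

lemma Ekeland_descent_exists:
  assumes "quasi_pseudometric d" and "\<gamma> > 0" and "bounded_below_fun \<phi>" and "\<phi> x0 < \<infinity>"
  obtains xs where "Ekeland_descent d \<phi> \<gamma> xs" and "xs 0 = x0"
proof -
  obtain m where m: "\<And>x. ereal m \<le> \<phi> x"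
    using assms(3) unfolding bounded_below_fun_def by blast
  define P where "P n x \<longleftrightarrow> \<phi> x < \<infinity> \<and> (n = 0 \<longrightarrow> x = x0)" for n :: nat and x
  define Q where "Q n x y \<longleftrightarrow> y \<in> S_gamma d \<phi> \<gamma> x \<and>
      (\<forall>w\<in>S_gamma d \<phi> \<gamma> x. \<phi> y \<le> \<phi> w + ereal (inverse (Suc n)))" for n x y
  have "\<exists>y. P (Suc n) y \<and> Q n x y" if "P n x" for x n
  proof -
    have "\<exists>y\<in>S_gamma d \<phi> \<gamma> x. \<forall>w\<in>S_gamma d \<phi> \<gamma> x. \<phi> y \<le> \<phi> w + ereal (inverse (Suc n))"
      using that m by (intro exists_nearly_minimal[OF S_gamma_refl[OF assms(1)]]) (auto simp: P_def)
    then obtain y where y: "Q n x y"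
      unfolding Q_def by blast
    have "\<phi> y \<le> \<phi> x"
      using S_gamma_le[OF assms(1) _, of \<gamma> y] assms(2) y unfolding Q_def by simp
    then have "\<phi> y < \<infinity>"
      using that unfolding P_def by (meson le_less_trans)
    with y show ?thesis
      unfolding P_def by blast
  qed
  then obtain xs where "\<forall>n. P n (xs n) \<and> Q n (xs n) (xs (Suc n))"
    using dependent_nat_choice[of P Q] assms(4) unfolding P_def by blast
  then have "Ekeland_descent d \<phi> \<gamma> xs" and "xs 0 = x0"
    using assms unfolding P_def Q_def by (auto intro!: Ekeland_descent.intro)
  then show thesis
    by (rule that)
qed

lemma Ekeland_point_exists:
  assumes "quasi_pseudometric d" and "seq_right_K_complete d"
    and "bounded_below_fun \<phi>" and "q_lsc d \<phi>" and "\<gamma> > 0" and "\<phi> x0 < \<infinity>"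
  obtains z where "z \<in> S_gamma d \<phi> \<gamma> x0" and "\<forall>y\<in>S_gamma d \<phi> \<gamma> z. \<phi> y = \<phi> z"
proof -
  obtain xs where descent: "Ekeland_descent d \<phi> \<gamma> xs" and "xs 0 = x0"
    by (rule Ekeland_descent_exists[OF assms(1,5,3,6)])
  then obtain z where "qconv d xs z"
    using Ekeland_descent.right_K_Cauchy assms(2) unfolding seq_right_K_complete_def by blast
  then show thesis
    using that Ekeland_descent.limit_in_S_gamma[OF descent _ assms(4), of z 0]
      Ekeland_descent.phi_constant_on_S_gamma[OF descent _ assms(4)] \<open>xs 0 = x0\<close>
    by auto
qed

theorem theorem3p4:
  fixes d :: "'a \<Rightarrow> 'a \<Rightarrow> real" and \<phi> :: "'a \<Rightarrow> ereal"
    and eps lam :: real and x0 :: 'a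
  assumes "quasi_pseudometric d"
    and "seq_right_K_complete d"
    and "\<forall>x. \<phi> x \<noteq> -\<infinity>"
    and "proper_fun \<phi>"
    and "bounded_below_fun \<phi>"
    and "q_lsc d \<phi>"
    and "eps > 0" and "lam > 0"
    and "\<phi> x0 \<le> ereal eps + (INF x. \<phi> x)"
  shows "\<exists>z. \<phi> z + ereal ((eps / lam) * d z x0) \<le> \<phi> x0
           \<and> d z x0 \<le> lam
           \<and> (\<forall>y\<in>S_gamma d \<phi> (eps / lam) z. \<phi> y = \<phi> z)
           \<and> (\<forall>x\<in>UNIV - S_gamma d \<phi> (eps / lam) z.
                 \<phi> z < \<phi> x + ereal ((eps / lam) * d x z))"
proof -
  have near_inf: "\<phi> x0 \<le> ereal eps + \<phi> x" for x
    using assms(9) by (meson INF_lower UNIV_I add_left_mono order_trans)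
  obtain p where "\<phi> p < \<infinity>"
    using assms(4) unfolding proper_fun_def by blast
  then have "ereal eps + \<phi> p < \<infinity>"
    by simp
  then have x0_finite: "\<phi> x0 < \<infinity>"
    using near_inf[of p] by (meson le_less_trans)
  have gamma_pos: "eps / lam > 0"
    using assms(7,8) by simp
  obtain z where z_in: "z \<in> S_gamma d \<phi> (eps / lam) x0"
    and z_const: "\<forall>y\<in>S_gamma d \<phi> (eps / lam) z. \<phi> y = \<phi> z"
    by (rule Ekeland_point_exists[OF assms(1,2,5,6) gamma_pos x0_finite])
  have "(eps / lam) * d z x0 \<le> eps"
    using S_gamma_dist_bound[OF assms(1) _ z_in x0_finite _ near_inf] gamma_pos assms(3) by simp
  then have "d z x0 \<le> lam"
    using assms(7,8) by (simp add: field_simps)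
  moreover have "\<phi> z < \<phi> x + ereal ((eps / lam) * d x z)"
    if "x \<in> UNIV - S_gamma d \<phi> (eps / lam) z" for x
    using that by (simp add: S_gamma_def not_le)
  ultimately show ?thesis
    using z_in z_const unfolding S_gamma_def by blast
qed

end
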